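(* Let $X$ be convex and let $f$ be $\alpha$-robustly quasiconvex for some $\alpha>0$, with $X\subset\operatorname{dom}f$. If $X^\infty\cap\mathcal{K}_q(f)=\{0\}$, then there exists $\varepsilon>0$ such that for all $u\in\mathbb{B}_\varepsilon$: (a) $f_u$ is bounded from below on $X$; (b) $\mathrm{Sol}(u)$ is nonempty and compact. Moreover, (c) $\operatorname{Lim\,sup}_{u\to0}\mathrm{Sol}(u)\subset\mathrm{Sol}(0)$ and (d) $\mathrm{Sol}(\cdot)$ is upper semicontinuous at $0$.
   Context: Standing assumptions: $f:\mathbb{R}^n\to\mathbb{R}\cup\{\pm\infty\}$ is proper (never $-\infty$ and finite at some point) and lower semicontinuous; $X\subset\mathbb{R}^n$ is a nonempty closed set with $\operatorname{dom}f\cap X$ unbounded. $f$ is $\alpha$-robustly quasiconvex ($\alpha\ge0$) if $x\mapsto f(x)+\langle u,x\rangle$ is quasiconvex for every $u\in\mathbb{B}_\alpha$, where $g$ quasiconvex means $g(\lambda x+(1-\lambda)y)\le\max\{g(x),g(y)\}$ for $x,y\in\operatorname{dom}g$, $\lambda\in[0,1]$; $\mathbb{B}_\alpha$ is the open ball of radius $\alpha$ centered at $0$. $X^\infty=\{u:\exists t_k\to+\infty,\ \exists x_k\in X,\ x_k/t_k\to u\}$. $f^\infty_q(u)=\sup_{x\in\operatorname{dom}f}\sup_{t>0}\frac{f(x+tu)-f(x)}{t}$, $\mathcal{K}_q(f)=\{d: f^\infty_q(d)\le0\}$. $f_u(x)=f(x)-\langle u,x\rangle$, $\mathrm{Sol}(u)=\{x\in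 X: f_u(x)\le f_u(y)\ \forall y\in X\}$. $\operatorname{Lim\,sup}_{u\to0}\mathrm{Sol}(u)$ is the set of $\bar x$ for which there exist $u_k\to0$, $x_k\in\mathrm{Sol}(u_k)$, $x_k\to\bar x$. A set-valued map $F$ is upper semicontinuous at $\bar u$ if for every open $V\supset F(\bar u)$ there is a neighborhood $U$ of $\bar u$ with $F(u)\subset V$ for all $u\in U$. *)

theory Defs
  imports "HOL-Analysis.Analysis"
begin

definition edom :: "('a \<Rightarrow> ereal) \<Rightarrow> 'a set" where
  "edom f = {x. f x < \<infinity>}"

definition proper_fun :: "('a \<Rightarrow> ereal) \<Rightarrow> bool" where
  "proper_fun f \<longleftrightarrow> (\<forall>x. f x \<noteq> -\<infinity>) \<and> (\<exists>x. f x \<noteq> \<infinity>)"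

definition lsc_fun :: "('a::topological_space \<Rightarrow> ereal) \<Rightarrow> bool" where
  "lsc_fun f \<longleftrightarrow> (\<forall>x. f x \<le> Liminf (at x) f)"

definition quasiconvex_fun :: "('a::real_vector \<Rightarrow> ereal) \<Rightarrow> bool" where
  "quasiconvex_fun g \<longleftrightarrow>
     (\<forall>x\<in>edom g. \<forall>y\<in>edom g. \<forall>l::real. 0 \<le> l \<and> l \<le> 1 \<longrightarrow>
        g (l *\<^sub>R x + (1 - l) *\<^sub>R y) \<le> max (g x) (g y))"

definition robustly_quasiconvex :: "real \<Rightarrow> ('a::real_inner \<Rightarrow> ereal) \<Rightarrow> bool" where
  "robustly_quasiconvex \<alpha> f \<longleftrightarrow>
     (\<forall>u. norm u < \<alpha> \<longrightarrow> quasiconvex_fun (\<lambda>x. f x + ereal (inner u x)))"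

definition asymptotic_cone :: "'a::real_normed_vector set \<Rightarrow> 'a set" where
  "asymptotic_cone X = {u. \<exists>t x. filterlim t at_top sequentially \<and> (\<forall>k. x k \<in> X) \<and>
                              ((\<lambda>k. (1 / t k) *\<^sub>R x k) \<longlongrightarrow> u) sequentially}"

definition q_asymptotic :: "('a::real_vector \<Rightarrow> ereal) \<Rightarrow> 'a \<Rightarrow> ereal" where
  "q_asymptotic f u = (SUP x\<in>edom f. SUP t\<in>{0<..}. (f (x + t *\<^sub>R u) - f x) / ereal t)"

definition Kq :: "('a::real_vector \<Rightarrow> ereal) \<Rightarrow> 'a set" where
  "Kq f = {d. q_asymptotic f d \<le> 0}"

definition tilt :: "('a::real_inner \<Rightarrow> ereal) \<Rightarrow> 'a \<Rightarrow> 'a \<Rightarrow> ereal" where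
  "tilt f u x = f x - ereal (inner u x)"

definition Sol :: "('a::real_inner \<Rightarrow> ereal) \<Rightarrow> 'a set \<Rightarrow> 'a \<Rightarrow> 'a set" where
  "Sol f X u = {x\<in>X. \<forall>y\<in>X. tilt f u x \<le> tilt f u y}"

end

theory Submission
  imports Defs
begin

(* For small tilts u the sublevel sets {x : X. f_u x <= f_u x0} are uniformly bounded.
   Otherwise there are u_k -> 0 and points x_k of these sublevel sets escaping to infinity
   along a direction d in the asymptotic cone of X, |d| = 1; quasiconvexity of f_{u_k} on the
   segments [x0, x_k] and lower semicontinuity give f <= f x0 on the ray x0 + R_+ d.
   Robustness upgrades this to d in K_q(f): tilting by a small multiple c d drives f_{cd} to
   -infinity along that ray, so quasiconvexity forces f_{cd} to decrease along every parallel
   ray, and c -> 0 leaves f (x + t d) <= f x. This contradicts X^infinity /\ K_q(f) = {0}.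
   Minimisers then exist on the compact sublevel sets, and the closed graph of Sol together
   with the uniform bound gives the remaining two claims. *)

lemma lsc_fun_iff_eventually_gt:
  "lsc_fun f \<longleftrightarrow> (\<forall>x y. y < f x \<longrightarrow> eventually (\<lambda>z. y < f z) (at x))"
  unfolding lsc_fun_def le_Liminf_iff by blast

lemma lsc_fun_eventually_gt_nhds:
  assumes "lsc_fun f" "y < f x"
  shows "eventually (\<lambda>z. y < f z) (nhds x)"
proof -
  have "eventually (\<lambda>z. z \<noteq> x \<longrightarrow> y < f z) (nhds x)"
    using assms unfolding lsc_fun_iff_eventually_gt eventually_at_filter by simp
  then show ?thesis
    by eventually_elim (use assms(2) in auto)
qed

lemma lsc_fun_le_limit:
  assumes "lsc_fun f" "xk \<longlonglongrightarrow> x" "eventually (\<lambda>k. f (xk k) \<le> ereal (b k)) sequentially"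
    and "b \<longlonglongrightarrow> \<beta>"
  shows "f x \<le> ereal \<beta>"
proof (rule ccontr)
  assume "\<not> f x \<le> ereal \<beta>"
  then obtain c where c: "\<beta> < c" "ereal c < f x"
    using ereal_dense2[of "ereal \<beta>" "f x"] by (auto simp: not_le)
  have "eventually (\<lambda>k. ereal c < f (xk k)) sequentially"
    using eventually_compose_filterlim[OF lsc_fun_eventually_gt_nhds[OF assms(1) c(2)] assms(2)] .
  moreover have "eventually (\<lambda>k. b k < c) sequentially"
    using order_tendstoD(2)[OF assms(4) c(1)] .
  ultimately have "eventually (\<lambda>k. False) sequentially"
    using assms(3)
  proof eventually_elim
    case (elim k)
    then have "ereal c < ereal (b k)" by (meson order.strict_trans2)
    with elim show False by simp
  qed
  then show False by simp
qed

lemma lsc_fun_attains_min: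
  fixes g :: "'a::topological_space \<Rightarrow> ereal"
  assumes lsc: "lsc_fun g" and K: "compact K" "K \<noteq> {}"
  shows "\<exists>x\<in>K. \<forall>z\<in>K. g x \<le> g z"
proof (rule ccontr)
  assume "\<not> ?thesis"
  then obtain better where better: "\<And>x. x \<in> K \<Longrightarrow> better x \<in> K \<and> g (better x) < g x"
    by (metis not_le)
  obtain U where U: "\<And>x. x \<in> K \<Longrightarrow> open (U x) \<and> x \<in> U x \<and> (\<forall>z\<in>U x. g (better x) < g z)"
    using lsc_fun_eventually_gt_nhds[OF lsc better[THEN conjunct2]] unfolding eventually_nhds
    by metis
  obtain C where C: "C \<subseteq> K" "finite C" "K \<subseteq> (\<Union>c\<in>C. U c)"
    using compactE_image[OF K(1), of K U] U by blast
  have "C \<noteq> {}" using C(3) K(2) by auto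
  then obtain j where j: "j \<in> C" "\<forall>c\<in>C. g (better j) \<le> g (better c)"
    using arg_min_if_finite[OF C(2), of "\<lambda>c. g (better c)"] by (metis not_le)
  obtain i where "i \<in> C" "better j \<in> U i"
    using C better j(1) by blast
  then have "g (better i) < g (better j)" using U C(1) by blast
  with j(2) \<open>i \<in> C\<close> show False by (simp add: not_le[symmetric])
qed

lemma proper_fun_real_on_edom:
  assumes "proper_fun f" "x \<in> edom f"
  obtains a where "f x = ereal a"
  using assms unfolding proper_fun_def edom_def by (cases "f x") auto

lemma edom_if_le_ereal: "f x \<le> ereal M \<Longrightarrow> x \<in> edom f"
  unfolding edom_def by (cases "f x") auto

lemma edom_tilt: "edom (tilt f u) = edom f"
proof -
  have "tilt f u x < \<infinity> \<longleftrightarrow> f x < \<infinity>" for x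
    unfolding tilt_def by (cases "f x") auto
  then show ?thesis unfolding edom_def by auto
qed

lemma tilt_le_ereal_iff: "tilt f u x \<le> ereal r \<longleftrightarrow> f x \<le> ereal (r + inner u x)"
  unfolding tilt_def by (cases "f x") auto

lemma ereal_less_tilt_iff: "ereal r < tilt f u x \<longleftrightarrow> ereal (r + inner u x) < f x"
  unfolding tilt_def by (cases "f x") auto

lemma lsc_fun_tilt:
  assumes "lsc_fun f"
  shows "lsc_fun (tilt f u)"
  unfolding lsc_fun_iff_eventually_gt
proof (intro allI impI)
  fix x y assume "y < tilt f u x"
  then obtain r where r: "y < ereal r" "ereal r < tilt f u x"
    using ereal_dense2 by blast
  then obtain s where s: "r + inner u x < s" "ereal s < f x"
    using ereal_dense2[of "ereal (r + inner u x)" "f x"] by (auto simp: ereal_less_tilt_iff)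
  have "eventually (\<lambda>z. ereal s < f z) (at x)"
    using assms s(2) unfolding lsc_fun_iff_eventually_gt by blast
  moreover have "eventually (\<lambda>z. r + inner u z < s) (at x)"
    by (rule order_tendstoD(2)[OF _ s(1)]) (intro tendsto_intros)
  ultimately show "eventually (\<lambda>z. y < tilt f u z) (at x)"
  proof eventually_elim
    case (elim z)
    then have "ereal (r + inner u z) < f z"
      using order.strict_trans[of "ereal (r + inner u z)" "ereal s"] by simp
    then have "ereal r < tilt f u z"
      by (simp add: ereal_less_tilt_iff)
    then show ?case using r(1) by simp
  qed
qed

lemma robustly_quasiconvex_tilt:
  assumes "robustly_quasiconvex \<alpha> f" "norm u < \<alpha>"
  shows "quasiconvex_fun (tilt f u)"
proof -
  have "tilt f u = (\<lambda>x. f x + ereal (inner (- u) x))"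
    unfolding tilt_def by (simp add: minus_ereal_def)
  then show ?thesis
    using assms unfolding robustly_quasiconvex_def by (metis norm_minus_cancel)
qed

lemma robustly_quasiconvex_tilt_le_max:
  assumes "robustly_quasiconvex \<alpha> f" "norm u < \<alpha>" "x \<in> edom f" "y \<in> edom f"
    and "0 \<le> l" "l \<le> 1"
  shows "tilt f u (l *\<^sub>R x + (1 - l) *\<^sub>R y) \<le> max (tilt f u x) (tilt f u y)"
  using robustly_quasiconvex_tilt[OF assms(1,2)] assms(3-)
  unfolding quasiconvex_fun_def edom_tilt by blast

lemma Kq_if_nonincreasing:
  assumes "proper_fun f" "\<And>x t. x \<in> edom f \<Longrightarrow> t > 0 \<Longrightarrow> f (x + t *\<^sub>R d) \<le> f x"
  shows "d \<in> Kq f"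
  unfolding Kq_def q_asymptotic_def
proof (intro CollectI SUP_least)
  fix x t assume x: "x \<in> edom f" and t: "t \<in> {0::real<..}"
  obtain a where a: "f x = ereal a" using proper_fun_real_on_edom[OF assms(1) x] .
  have "f (x + t *\<^sub>R d) \<le> ereal a" using assms(2)[OF x] t a by auto
  moreover have "f (x + t *\<^sub>R d) \<noteq> -\<infinity>" using assms(1) unfolding proper_fun_def by auto
  ultimately obtain b where "f (x + t *\<^sub>R d) = ereal b" "b \<le> a"
    by (cases "f (x + t *\<^sub>R d)") auto
  then show "(f (x + t *\<^sub>R d) - f x) / ereal t \<le> 0"
    using t a by (simp add: divide_le_0_iff)
qed

lemma tilt_antimono_along_bounded_ray:
  assumes rqc: "robustly_quasiconvex \<alpha> f" and pr: "proper_fun f" and lsc: "lsc_fun f"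
    and v: "norm v < \<alpha>" "inner v d > 0"
    and bnd: "\<And>s. s \<ge> 0 \<Longrightarrow> f (x0 + s *\<^sub>R d) \<le> ereal M"
    and x: "x \<in> edom f" and t: "t > 0"
  shows "tilt f v (x + t *\<^sub>R d) \<le> tilt f v x"
proof -
  obtain a where a: "f x = ereal a" using proper_fun_real_on_edom[OF pr x] .
  then have tilt_x: "tilt f v x = ereal (a - inner v x)" unfolding tilt_def by simp
  define s where "s n = t + real n" for n
  define y where "y n = x0 + s n *\<^sub>R d" for n
  define w where "w n = t / s n" for n
  \<comment> \<open>p n lies on the segment [x, y n] and tends to x + t d, while f_v (y n) tends to -\<infinity>\<close>
  define p where "p n = (1 - w n) *\<^sub>R x + w n *\<^sub>R y n" for n
  have s_pos: "s n > 0" for n using t unfolding s_def by simp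
  have y_le: "f (y n) \<le> ereal M" for n using bnd s_pos[of n] unfolding y_def by simp
  then have y_dom: "y n \<in> edom f" for n by (rule edom_if_le_ereal)
  have tilt_y: "tilt f v (y n) \<le> ereal (M - inner v x0 - s n * inner v d)" for n
    using y_le[of n] unfolding tilt_le_ereal_iff y_def by (simp add: inner_add_right)
  have "filterlim s at_top sequentially"
    unfolding s_def by (rule filterlim_tendsto_add_at_top[OF tendsto_const filterlim_real_sequentially])
  then have "eventually (\<lambda>n. (M - inner v x0 - (a - inner v x)) / inner v d < s n) sequentially"
    by (simp add: filterlim_at_top_dense)
  then have p_below: "eventually (\<lambda>n. tilt f v (p n) \<le> ereal (a - inner v x)) sequentially"
    unfolding tilt_x[symmetric]
  proof eventually_elim
    case (elim n)
    then have "M - inner v x0 - s n * inner v d < a - inner v x"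
      using v(2) by (simp add: field_simps)
    then have "tilt f v (y n) \<le> tilt f v x"
      by (intro order_trans[OF tilt_y[of n]]) (simp add: tilt_x)
    moreover have "0 \<le> 1 - w n" "1 - w n \<le> 1"
      using s_pos[of n] t unfolding w_def s_def by (auto simp: field_simps)
    ultimately show ?case
      using robustly_quasiconvex_tilt_le_max[OF rqc v(1) x y_dom[of n], of "1 - w n"]
      unfolding p_def by (simp add: max_absorb1)
  qed
  have p_lim: "p \<longlonglongrightarrow> x + t *\<^sub>R d"
  proof -
    have p_eq: "p = (\<lambda>n. x + t *\<^sub>R d + w n *\<^sub>R (x0 - x))"
      using s_pos unfolding p_def y_def w_def by (simp add: algebra_simps less_imp_neq[symmetric])
    have "w \<longlonglongrightarrow> 0"
      unfolding w_def using \<open>filterlim s at_top sequentially\<close>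
      by (intro tendsto_divide_0[OF tendsto_const] filterlim_at_top_imp_at_infinity)
    then have "p \<longlonglongrightarrow> x + t *\<^sub>R d + 0 *\<^sub>R (x0 - x)"
      unfolding p_eq by (intro tendsto_intros)
    then show ?thesis by simp
  qed
  show ?thesis
    using lsc_fun_le_limit[OF lsc_fun_tilt[OF lsc] p_lim p_below tendsto_const] tilt_x by simp
qed

lemma Kq_if_bounded_above_on_ray:
  assumes rqc: "robustly_quasiconvex \<alpha> f" and "\<alpha> > 0" and pr: "proper_fun f" and lsc: "lsc_fun f"
    and bnd: "\<And>s. s \<ge> 0 \<Longrightarrow> f (x0 + s *\<^sub>R d) \<le> ereal M"
  shows "d \<in> Kq f"
proof (rule Kq_if_nonincreasing[OF pr])
  fix x and t :: real assume x: "x \<in> edom f" and t: "t > 0"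
  show "f (x + t *\<^sub>R d) \<le> f x"
  proof (cases "d = 0")
    case False
    obtain a where a: "f x = ereal a" using proper_fun_real_on_edom[OF pr x] .
    define c where "c n = \<alpha> / (2 * norm d * real (Suc n))" for n
    have bound: "f (x + t *\<^sub>R d) \<le> ereal (a + c n * t * inner d d)" for n
    proof -
      have c_pos: "c n > 0" using \<open>\<alpha> > 0\<close> False unfolding c_def by simp
      have "norm (c n *\<^sub>R d) = \<alpha> / (2 * real (Suc n))"
        using \<open>\<alpha> > 0\<close> False unfolding c_def by simp
      also have "\<dots> < \<alpha>" using \<open>\<alpha> > 0\<close> by (simp add: field_simps add_pos_nonneg)
      finally have norm_lt: "norm (c n *\<^sub>R d) < \<alpha>" .
      have inner_pos: "inner (c n *\<^sub>R d) d > 0" using c_pos False by simp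
      have "tilt f (c n *\<^sub>R d) (x + t *\<^sub>R d) \<le> tilt f (c n *\<^sub>R d) x"
        by (rule tilt_antimono_along_bounded_ray[OF rqc pr lsc norm_lt inner_pos bnd x t])
      moreover have "tilt f (c n *\<^sub>R d) x = ereal (a - inner (c n *\<^sub>R d) x)"
        by (simp add: tilt_def a)
      ultimately have "f (x + t *\<^sub>R d) \<le> ereal (a - inner (c n *\<^sub>R d) x + inner (c n *\<^sub>R d) (x + t *\<^sub>R d))"
        by (simp only: tilt_le_ereal_iff[symmetric])
      then show ?thesis by (simp add: inner_add_right algebra_simps)
    qed
    have lim: "(\<lambda>n. ereal (a + c n * t * inner d d)) \<longlonglongrightarrow> ereal (a + 0 * t * inner d d)"
    proof -
      have "c \<longlonglongrightarrow> 0"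
        using LIMSEQ_Suc[OF lim_const_over_n[of "\<alpha> / (2 * norm d)"]] unfolding c_def by simp
      then show ?thesis by (intro tendsto_intros)
    qed
    show ?thesis
      using LIMSEQ_le_const[OF lim] bound a by auto
  qed simp
qed

lemma asymptotic_cone_if_normalized_limit:
  assumes "\<And>k. x k \<in> X" "filterlim r at_top sequentially"
    and "(\<lambda>k. (1 / r k) *\<^sub>R (x k - x0)) \<longlonglongrightarrow> d"
  shows "d \<in> asymptotic_cone X"
  unfolding asymptotic_cone_def
proof (intro CollectI exI conjI allI)
  have "(\<lambda>k. 1 / r k) \<longlonglongrightarrow> 0"
    by (rule tendsto_divide_0[OF tendsto_const filterlim_at_top_imp_at_infinity[OF assms(2)]])
  then have "(\<lambda>k. (1 / r k) *\<^sub>R (x k - x0) + (1 / r k) *\<^sub>R x0) \<longlonglongrightarrow> d + 0 *\<^sub>R x0"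
    using assms(3) by (intro tendsto_intros)
  then show "(\<lambda>k. (1 / r k) *\<^sub>R x k) \<longlonglongrightarrow> d"
    by (simp add: scaleR_diff_right)
qed (use assms in auto)

lemma ray_below_if_escaping_sublevel_points:
  assumes rqc: "robustly_quasiconvex \<alpha> f" and pr: "proper_fun f" and lsc: "lsc_fun f"
    and x0: "x0 \<in> edom f"
    and u: "uk \<longlonglongrightarrow> 0" "\<And>k. norm (uk k) < \<alpha>"
    and x: "\<And>k. x k \<in> edom f" "\<And>k. tilt f (uk k) (x k) \<le> tilt f (uk k) x0"
    and r: "filterlim r at_top sequentially" "(\<lambda>k. (1 / r k) *\<^sub>R (x k - x0)) \<longlonglongrightarrow> d"
    and s: "s \<ge> 0"
  shows "f (x0 + s *\<^sub>R d) \<le> f x0"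
proof -
  obtain a where a: "f x0 = ereal a" using proper_fun_real_on_edom[OF pr x0] .
  define e where "e k = (1 / r k) *\<^sub>R (x k - x0)" for k
  define y where "y k = x0 + s *\<^sub>R e k" for k
  have "eventually (\<lambda>k. s < r k) sequentially"
    using r(1) by (simp add: filterlim_at_top_dense)
  then have "eventually (\<lambda>k. f (y k) \<le> ereal (a + inner (uk k) (s *\<^sub>R e k))) sequentially"
  proof eventually_elim
    case (elim k)
    define l where "l = s / r k"
    have l: "0 \<le> l" "l \<le> 1" using elim s unfolding l_def by auto
    have y_eq: "y k = l *\<^sub>R x k + (1 - l) *\<^sub>R x0"
      using elim s unfolding y_def e_def l_def by (simp add: algebra_simps)
    have "tilt f (uk k) (y k) \<le> tilt f (uk k) x0"
      using robustly_quasiconvex_tilt_le_max[OF rqc u(2)[of k] x(1)[of k] x0 l] x(2)[of k]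
      unfolding y_eq by (simp add: max_absorb2)
    also have "\<dots> = ereal (a - inner (uk k) x0)" by (simp add: tilt_def a)
    finally show ?case
      unfolding tilt_le_ereal_iff by (simp add: y_def inner_add_right)
  qed
  moreover have "y \<longlonglongrightarrow> x0 + s *\<^sub>R d"
    using r(2) unfolding y_def e_def by (intro tendsto_intros)
  moreover have "(\<lambda>k. a + inner (uk k) (s *\<^sub>R e k)) \<longlonglongrightarrow> a + inner 0 (s *\<^sub>R d)"
    using u(1) r(2) unfolding e_def by (intro tendsto_intros)
  ultimately show ?thesis
    using lsc_fun_le_limit[OF lsc] a by fastforce
qed

lemma tilt_sublevel_sets_uniformly_bounded:
  fixes f :: "'a::euclidean_space \<Rightarrow> ereal"
  assumes rqc: "robustly_quasiconvex \<alpha> f" and "\<alpha> > 0" and pr: "proper_fun f" and lsc: "lsc_fun f"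
    and X: "X \<subseteq> edom f" "x0 \<in> X"
    and cone: "asymptotic_cone X \<inter> Kq f = {0}"
  shows "\<exists>\<epsilon>>0. \<exists>R. \<forall>u x. norm u < \<epsilon> \<longrightarrow> x \<in> X \<longrightarrow> tilt f u x \<le> tilt f u x0 \<longrightarrow> norm x \<le> R"
proof (rule ccontr)
  assume unbounded: "\<not> ?thesis"
  have "\<exists>u x. norm u < \<alpha> / real (Suc k) \<and> x \<in> X \<and> tilt f u x \<le> tilt f u x0 \<and>
      norm x0 + real (Suc k) < norm x" for k
  proof -
    have "\<alpha> / real (Suc k) > 0" using \<open>\<alpha> > 0\<close> by simp
    then have "\<not> (\<forall>u x. norm u < \<alpha> / real (Suc k) \<longrightarrow> x \<in> X \<longrightarrow> tilt f u x \<le> tilt f u x0 \<longrightarrow>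
        norm x \<le> norm x0 + real (Suc k))"
      using unbounded by blast
    then show ?thesis by (auto simp: not_le)
  qed
  then obtain uk xk where "\<forall>k. norm (uk k) < \<alpha> / real (Suc k) \<and> xk k \<in> X \<and>
      tilt f (uk k) (xk k) \<le> tilt f (uk k) x0 \<and> norm x0 + real (Suc k) < norm (xk k)"
    by metis
  then have uk: "\<And>k. norm (uk k) < \<alpha> / real (Suc k)"
    and xk: "\<And>k. xk k \<in> X" "\<And>k. tilt f (uk k) (xk k) \<le> tilt f (uk k) x0"
    and far: "\<And>k. norm x0 + real (Suc k) < norm (xk k)"
    by auto
  have uk_lt: "norm (uk k) < \<alpha>" for k
  proof -
    have "\<alpha> / real (Suc k) \<le> \<alpha>" using \<open>\<alpha> > 0\<close> by (simp add: divide_le_eq)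
    then show ?thesis using uk[of k] by linarith
  qed
  have "eventually (\<lambda>k. norm (uk k) \<le> \<alpha> / real (Suc k)) sequentially"
    using uk by (simp add: less_imp_le)
  then have uk_lim: "uk \<longlonglongrightarrow> 0"
    by (rule Lim_null_comparison) (rule LIMSEQ_Suc[OF lim_const_over_n])
  define r where "r k = norm (xk k - x0)" for k
  have r_gt: "real (Suc k) < r k" for k
    using far[of k] norm_triangle_ineq2[of "xk k" x0] unfolding r_def by linarith
  have "real k \<le> r k" for k using r_gt[of k] by linarith
  then have "filterlim r at_top sequentially"
    by (intro filterlim_at_top_mono[OF filterlim_real_sequentially] always_eventually allI)
  define e where "e k = (1 / r k) *\<^sub>R (xk k - x0)" for k
  have "r k > 0" for k using order.strict_trans[OF _ r_gt, of 0 k] by simp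
  then have "e k \<in> sphere 0 1" for k unfolding e_def r_def by simp
  then obtain d \<sigma> where d: "d \<in> sphere 0 1" and \<sigma>: "strict_mono \<sigma>" and e_lim: "(e \<circ> \<sigma>) \<longlonglongrightarrow> d"
    using seq_compactE[OF compact_imp_seq_compact[OF compact_sphere]] by blast
  have r_\<sigma>: "filterlim (r \<circ> \<sigma>) at_top sequentially"
    using filterlim_compose[OF \<open>filterlim r at_top sequentially\<close> filterlim_subseq[OF \<sigma>]] by (simp add: o_def)
  have "d \<in> asymptotic_cone X"
    using asymptotic_cone_if_normalized_limit[OF xk(1) r_\<sigma>] e_lim unfolding e_def by (simp add: o_def)
  moreover have "d \<in> Kq f"
  proof -
    obtain a where a: "f x0 = ereal a" using proper_fun_real_on_edom[OF pr] X by blast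
    have x0_dom: "x0 \<in> edom f" and xk_dom: "\<And>k. (xk \<circ> \<sigma>) k \<in> edom f"
      using X xk(1) by auto
    have uk_\<sigma>: "norm ((uk \<circ> \<sigma>) k) < \<alpha>" for k using uk_lt by simp
    have xk_\<sigma>: "tilt f ((uk \<circ> \<sigma>) k) ((xk \<circ> \<sigma>) k) \<le> tilt f ((uk \<circ> \<sigma>) k) x0" for k
      using xk(2) by simp
    have e_\<sigma>: "(\<lambda>k. (1 / (r \<circ> \<sigma>) k) *\<^sub>R ((xk \<circ> \<sigma>) k - x0)) \<longlonglongrightarrow> d"
      using e_lim unfolding e_def by (simp add: o_def)
    have "f (x0 + s *\<^sub>R d) \<le> f x0" if "s \<ge> 0" for s
      by (rule ray_below_if_escaping_sublevel_points[OF rqc pr lsc x0_dom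
            LIMSEQ_subseq_LIMSEQ[OF uk_lim \<sigma>] uk_\<sigma> xk_dom xk_\<sigma> r_\<sigma> e_\<sigma> that])
    then have "f (x0 + s *\<^sub>R d) \<le> ereal a" if "s \<ge> 0" for s
      using that a by simp
    then show ?thesis by (rule Kq_if_bounded_above_on_ray[OF rqc \<open>\<alpha> > 0\<close> pr lsc])
  qed
  ultimately have "d = 0" using cone by blast
  then show False using d by simp
qed

lemma Sol_limit:
  assumes pr: "proper_fun f" and lsc: "lsc_fun f" and X: "closed X" "X \<subseteq> edom f"
    and u: "uk \<longlonglongrightarrow> u" and x: "\<And>k. xk k \<in> Sol f X (uk k)" "xk \<longlonglongrightarrow> x"
  shows "x \<in> Sol f X u"
proof -
  have xk_X: "xk k \<in> X" for k using x(1) unfolding Sol_def by blast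
  then have "x \<in> X" using closed_sequentially[OF X(1) _ x(2)] by blast
  moreover have "tilt f u x \<le> tilt f u y" if "y \<in> X" for y
  proof -
    obtain b where b: "f y = ereal b" using proper_fun_real_on_edom[OF pr] X(2) \<open>y \<in> X\<close> by blast
    have "tilt f (uk k) (xk k) \<le> ereal (b - inner (uk k) y)" for k
      using x(1)[of k] \<open>y \<in> X\<close> unfolding Sol_def by (force simp: tilt_def b)
    then have "eventually (\<lambda>k. f (xk k) \<le> ereal (b - inner (uk k) y + inner (uk k) (xk k))) sequentially"
      by (simp add: tilt_le_ereal_iff)
    moreover have "(\<lambda>k. b - inner (uk k) y + inner (uk k) (xk k)) \<longlonglongrightarrow> b - inner u y + inner u x"
      using u x(2) by (intro tendsto_intros)
    ultimately have "f x \<le> ereal (b - inner u y + inner u x)"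
      by (rule lsc_fun_le_limit[OF lsc x(2)])
    then show ?thesis by (simp add: tilt_le_ereal_iff[symmetric] tilt_def b)
  qed
  ultimately show ?thesis unfolding Sol_def by blast
qed

lemma closed_Sol:
  assumes "proper_fun f" "lsc_fun f" "closed X" "X \<subseteq> edom f"
  shows "closed (Sol f X u)"
  unfolding closed_sequential_limits
  using Sol_limit[OF assms tendsto_const] by blast

lemma Sol_nonempty:
  fixes f :: "'a::{real_inner, heine_borel} \<Rightarrow> ereal"
  assumes lsc: "lsc_fun f" and X: "closed X" "x0 \<in> X"
    and bounded: "\<And>x. x \<in> X \<Longrightarrow> tilt f u x \<le> tilt f u x0 \<Longrightarrow> norm x \<le> R"
  shows "Sol f X u \<noteq> {}"
proof -
  define K where "K = X \<inter> cball 0 R"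
  have "compact K" unfolding K_def by (intro closed_Int_compact X(1) compact_cball)
  have "x0 \<in> K" using X(2) bounded[OF X(2) order_refl] unfolding K_def by simp
  then have "\<exists>z\<in>K. \<forall>w\<in>K. tilt f u z \<le> tilt f u w"
    using lsc_fun_attains_min[OF lsc_fun_tilt[OF lsc] \<open>compact K\<close>] by blast
  then obtain z where z: "z \<in> K" "\<And>w. w \<in> K \<Longrightarrow> tilt f u z \<le> tilt f u w" by blast
  have "tilt f u z \<le> tilt f u w" if "w \<in> X" for w
  proof (cases "norm w \<le> R")
    case True
    then show ?thesis using z(2) that unfolding K_def by simp
  next
    case False
    then have "\<not> tilt f u w \<le> tilt f u x0" using bounded[OF that] by blast
    then have "tilt f u x0 < tilt f u w" by simp
    then show ?thesis using z(2)[OF \<open>x0 \<in> K\<close>] by simp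
  qed
  then have "z \<in> Sol f X u" using z(1) unfolding Sol_def K_def by blast
  then show ?thesis by blast
qed

lemma tilt_bounded_below_if_Sol_nonempty:
  assumes "proper_fun f" "X \<subseteq> edom f" "Sol f X u \<noteq> {}"
  shows "\<exists>m::real. \<forall>x\<in>X. ereal m \<le> tilt f u x"
proof -
  obtain z where z: "z \<in> Sol f X u" using assms(3) by blast
  then have "z \<in> X" unfolding Sol_def by blast
  then obtain a where "f z = ereal a" using proper_fun_real_on_edom[OF assms(1)] assms(2) by blast
  then have "tilt f u z = ereal (a - inner u z)" by (simp add: tilt_def)
  then have "\<forall>x\<in>X. ereal (a - inner u z) \<le> tilt f u x" using z unfolding Sol_def by auto
  then show ?thesis by blast
qed

lemma upper_semicontinuous_at_if_closed_graph:
  fixes F :: "'a::metric_space \<Rightarrow> 'b::metric_space set"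
  assumes graph: "\<And>uk xk x. uk \<longlonglongrightarrow> a \<Longrightarrow> (\<And>k. xk k \<in> F (uk k)) \<Longrightarrow> xk \<longlonglongrightarrow> x \<Longrightarrow> x \<in> F a"
    and bounded: "\<epsilon> > 0" "compact K" "\<And>u. dist u a < \<epsilon> \<Longrightarrow> F u \<subseteq> K"
    and V: "open V" "F a \<subseteq> V"
  shows "\<exists>\<delta>>0. \<forall>u. dist u a < \<delta> \<longrightarrow> F u \<subseteq> V"
proof (rule ccontr)
  assume not_usc: "\<not> ?thesis"
  have "\<exists>u x. dist u a < min \<epsilon> (1 / real (Suc k)) \<and> x \<in> F u \<and> x \<notin> V" for k
  proof -
    have "min \<epsilon> (1 / real (Suc k)) > 0" using bounded(1) by simp
    then have "\<not> (\<forall>u. dist u a < min \<epsilon> (1 / real (Suc k)) \<longrightarrow> F u \<subseteq> V)"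
      using not_usc by blast
    then show ?thesis by blast
  qed
  then obtain uk xk where "\<forall>k. dist (uk k) a < min \<epsilon> (1 / real (Suc k)) \<and> xk k \<in> F (uk k) \<and> xk k \<notin> V"
    by metis
  then have uk: "\<And>k. dist (uk k) a < \<epsilon>" "\<And>k. dist (uk k) a < 1 / real (Suc k)"
    and xk: "\<And>k. xk k \<in> F (uk k)" "\<And>k. xk k \<notin> V"
    by simp_all
  have "eventually (\<lambda>k. norm (dist (uk k) a) \<le> 1 / real (Suc k)) sequentially"
    using uk(2) by (simp add: less_imp_le)
  then have "(\<lambda>k. dist (uk k) a) \<longlonglongrightarrow> 0"
    by (rule Lim_null_comparison[OF _ LIMSEQ_Suc[OF lim_const_over_n[of 1]]])
  then have uk_lim: "uk \<longlonglongrightarrow> a" by (rule tendsto_dist_iff[THEN iffD2])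
  have "\<forall>k. xk k \<in> K" using xk(1) bounded(3)[OF uk(1)] by blast
  then obtain x \<sigma> where \<sigma>: "strict_mono \<sigma>" and x: "(xk \<circ> \<sigma>) \<longlonglongrightarrow> x"
    using seq_compactE[OF compact_imp_seq_compact[OF bounded(2)]] by blast
  have "x \<in> F a"
    by (rule graph[OF LIMSEQ_subseq_LIMSEQ[OF uk_lim \<sigma>] _ x]) (simp add: xk(1))
  then have "eventually (\<lambda>k. (xk \<circ> \<sigma>) k \<in> V) sequentially"
    using V topological_tendstoD[OF x] by blast
  then show False using xk(2) by simp
qed

theorem mainTheorem11:
  fixes f :: "'a::euclidean_space \<Rightarrow> ereal" and X :: "'a set" and \<alpha> :: real
  assumes "proper_fun f" and "lsc_fun f"
    and "closed X" and "X \<noteq> {}" and "\<not> bounded (edom f \<inter> X)"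
    and "convex X"
    and "\<alpha> > 0" and "robustly_quasiconvex \<alpha> f"
    and "X \<subseteq> edom f"
    and "asymptotic_cone X \<inter> Kq f = {0}"
  shows "(\<exists>\<epsilon>>0. \<forall>u. norm u < \<epsilon> \<longrightarrow>
            (\<exists>m::real. \<forall>x\<in>X. ereal m \<le> tilt f u x) \<and>
            Sol f X u \<noteq> {} \<and> compact (Sol f X u)) \<and>
         (\<forall>xb uk xk. (uk \<longlongrightarrow> 0) sequentially \<and> (\<forall>k. xk k \<in> Sol f X (uk k)) \<and>
            (xk \<longlongrightarrow> xb) sequentially \<longrightarrow> xb \<in> Sol f X 0) \<and>
         (\<forall>V. open V \<and> Sol f X 0 \<subseteq> V \<longrightarrow>
            (\<exists>\<delta>>0. \<forall>u. norm u < \<delta> \<longrightarrow> Sol f X u \<subseteq> V))"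
proof -
  note pr = assms(1) and lsc = assms(2) and X = assms(3,9)
  obtain x0 where x0: "x0 \<in> X" using assms(4) by blast
  obtain \<epsilon> R where "\<epsilon> > 0"
    and sublevel: "\<And>u x. norm u < \<epsilon> \<Longrightarrow> x \<in> X \<Longrightarrow> tilt f u x \<le> tilt f u x0 \<Longrightarrow> norm x \<le> R"
    using tilt_sublevel_sets_uniformly_bounded[OF assms(8,7) pr lsc assms(9) x0 assms(10)] by blast
  have Sol_cball: "Sol f X u \<subseteq> cball 0 R" if "norm u < \<epsilon>" for u
    using sublevel[OF that] x0 unfolding Sol_def by auto
  have graph: "\<And>uk xk x. uk \<longlonglongrightarrow> 0 \<Longrightarrow> (\<And>k. xk k \<in> Sol f X (uk k)) \<Longrightarrow> xk \<longlonglongrightarrow> x \<Longrightarrow> x \<in> Sol f X 0"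
    using Sol_limit[OF pr lsc X] by blast
  have "(\<exists>m::real. \<forall>x\<in>X. ereal m \<le> tilt f u x) \<and> Sol f X u \<noteq> {} \<and> compact (Sol f X u)"
    if "norm u < \<epsilon>" for u
    using Sol_nonempty[OF lsc X(1) x0 sublevel[OF that]] tilt_bounded_below_if_Sol_nonempty[OF pr X(2)]
      closed_Sol[OF pr lsc X] bounded_subset[OF bounded_cball Sol_cball[OF that]]
    by (auto simp: compact_eq_bounded_closed)
  moreover have "\<exists>\<delta>>0. \<forall>u. norm u < \<delta> \<longrightarrow> Sol f X u \<subseteq> V" if "open V" "Sol f X 0 \<subseteq> V" for V
  proof -
    have "\<exists>\<delta>>0. \<forall>u. dist u 0 < \<delta> \<longrightarrow> Sol f X u \<subseteq> V"
    proof (rule upper_semicontinuous_at_if_closed_graph[where K = "cball 0 R"])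
      show "Sol f X u \<subseteq> cball 0 R" if "dist u 0 < \<epsilon>" for u
        using Sol_cball that by (simp add: dist_norm)
    qed (use graph \<open>\<epsilon> > 0\<close> that in auto)
    then show ?thesis by simp
  qed
  ultimately show ?thesis using \<open>\<epsilon> > 0\<close> graph by blast
qed

end
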